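(* Let $\Omega\subset\mathbb{R}^2$ be a smooth bounded domain, let $(u_p)_{p>1}$ be a family of sign-changing solutions of $-\Delta u=|u|^{p-1}u$ in $\Omega$, $u=0$ on $\partial\Omega$, with $p\int_\Omega|\nabla u_p|^2dx\to\beta\in\mathbb{R}$, and let $k\in\mathbb{N}\setminus\{0\}$ and families $(x_{i,p})$, $i=1,\dots,k$, be such that (along a sequence $p\to+\infty$) $p|u_p(x_{i,p})|^{p-1}\to+\infty$ and $(\mathcal P_1^k)$, $(\mathcal P_2^k)$, $(\mathcal P_3^k)$ hold, with no family $(x_{k+1,p})$ extending them as described below. Then $$\frac{\operatorname{dist}(x_{i,p},NL_p)}{\mu_{i,p}}\to+\infty\quad\text{as }p\to+\infty,\ \text{for all }i\in\{1,\dots,k\}.$$ As a consequence, for each $i$, letting $\mathcal N_{i,p}\subset\Omega$ be the nodal domain of $u_p$ containing $x_{i,p}$, $u_p^i:=u_p\chi_{\mathcal N_{i,p}}$, and $$z_{i,p}(x):=\frac{p}{u_p(x_{i,p})}\left(u_p^i(x_{i,p}+\mu_{i,p}x)-u_p(x_{i,p})\right),\quad x\in\widetilde{\mathcal N}_{i,p}:=\frac{\mathcal N_{i,p}-x_{i,p}}{\mu_{i,p}},$$ one has $z_{i,p}\to U$ in $C^1_{loc}(\mathbb{R}^2)$.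
   Context: $NL_p:=\{x\in\Omega:u_p(x)=0\}$ is the nodal line; $\chi_A$ is the characteristic function of $A$. $\mu_{i,p}:=(p|u_p(x_{i,p})|^{p-1})^{-1/2}$, $R_{n,p}(x):=\min_{i\le n}|x-x_{i,p}|$, $U(x)=\log\left(\frac{1}{1+\frac18|x|^2}\right)^2$. $(\mathcal P_1^n)$: $|x_{i,p}-x_{j,p}|/\mu_{i,p}\to+\infty$ for $i\ne j$. $(\mathcal P_2^n)$: $v_{i,p}(x):=\frac{p}{u_p(x_{i,p})}(u_p(x_{i,p}+\mu_{i,p}x)-u_p(x_{i,p}))\to U$ in $C^1_{loc}(\mathbb{R}^2)$ for each $i$. $(\mathcal P_3^n)$: $\exists C>0$ with $pR_{n,p}(x)^2|u_p(x)|^{p-1}\le C$ for $p$ large, all $x\in\Omega$. Maximality: for no family $(x_{k+1,p})$ can one extract a further sequence along which $(\mathcal P_1^{k+1}),(\mathcal P_2^{k+1}),(\mathcal P_3^{k+1})$ hold for $(x_{i,p})_{i=1,\dots,k+1}$ (such $k$ and families exist by the preceding proposition of the paper). *)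

theory Defs
  imports "HOL-Analysis.Analysis"
begin

type_synonym pt = "real^2"

definition smooth_fun :: "(real \<Rightarrow> real) \<Rightarrow> bool" where
  "smooth_fun g \<longleftrightarrow> (\<exists>f :: nat \<Rightarrow> real \<Rightarrow> real. f 0 = g \<and>
      (\<forall>k x. (f k has_real_derivative f (Suc k) x) (at x)))"

definition smooth_bounded_domain :: "pt set \<Rightarrow> bool" where
  "smooth_bounded_domain \<Omega> \<longleftrightarrow> open \<Omega> \<and> bounded \<Omega> \<and> connected \<Omega> \<and> \<Omega> \<noteq> {} \<and>
     (\<forall>a\<in>frontier \<Omega>. \<exists>r>0. \<exists>(Q :: pt \<Rightarrow> pt) g. orthogonal_transformation Q \<and> smooth_fun g \<and>
        \<Omega> \<inter> ball a r = {y \<in> ball a r. (Q (y - a)) $ 2 < g ((Q (y - a)) $ 1)})"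

definition partial :: "2 \<Rightarrow> (pt \<Rightarrow> real) \<Rightarrow> pt \<Rightarrow> real" where
  "partial i f = (\<lambda>x. frechet_derivative f (at x) (axis i 1))"

definition grad :: "(pt \<Rightarrow> real) \<Rightarrow> pt \<Rightarrow> pt" where
  "grad f x = (\<chi> i. partial i f x)"

definition laplacian :: "(pt \<Rightarrow> real) \<Rightarrow> pt \<Rightarrow> real" where
  "laplacian f x = (\<Sum>i\<in>UNIV. partial i (partial i f) x)"

definition lane_emden_solution :: "pt set \<Rightarrow> real \<Rightarrow> (pt \<Rightarrow> real) \<Rightarrow> bool" where
  "lane_emden_solution \<Omega> p u \<longleftrightarrow>
     (\<forall>x\<in>\<Omega>. u differentiable (at x) \<and> (\<forall>i. partial i u differentiable (at x))) \<and>
     (\<forall>i j. continuous_on \<Omega> (partial i (partial j u))) \<and>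
     continuous_on (closure \<Omega>) u \<and> (\<forall>x\<in>frontier \<Omega>. u x = 0) \<and>
     (\<forall>x\<in>\<Omega>. - laplacian u x = \<bar>u x\<bar> powr (p - 1) * u x) \<and>
     (\<lambda>x. (norm (grad u x))\<^sup>2) integrable_on \<Omega>"

definition sign_changing :: "pt set \<Rightarrow> (pt \<Rightarrow> real) \<Rightarrow> bool" where
  "sign_changing \<Omega> u \<longleftrightarrow> (\<exists>a\<in>\<Omega>. u a > 0) \<and> (\<exists>b\<in>\<Omega>. u b < 0)"

definition nodal_line :: "pt set \<Rightarrow> (pt \<Rightarrow> real) \<Rightarrow> pt set" where
  "nodal_line \<Omega> u = {x \<in> \<Omega>. u x = 0}"

definition nodal_domain :: "pt set \<Rightarrow> (pt \<Rightarrow> real) \<Rightarrow> pt \<Rightarrow> pt set" where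
  "nodal_domain \<Omega> u x = connected_component_set {y \<in> \<Omega>. u y \<noteq> 0} x"

definition U :: "pt \<Rightarrow> real" where
  "U x = ln ((1 / (1 + (1/8) * (norm x)\<^sup>2))\<^sup>2)"

definition C1loc_conv :: "(nat \<Rightarrow> pt \<Rightarrow> real) \<Rightarrow> (nat \<Rightarrow> pt set) \<Rightarrow> (pt \<Rightarrow> real) \<Rightarrow> bool" where
  "C1loc_conv f D g \<longleftrightarrow> (\<forall>K. compact K \<longrightarrow> (\<forall>\<epsilon>>0. eventually (\<lambda>n. K \<subseteq> D n \<and>
      (\<forall>x\<in>K. f n differentiable (at x) \<and> \<bar>f n x - g x\<bar> < \<epsilon> \<and>
               norm (grad (f n) x - grad g x) < \<epsilon>)) sequentially))"

text \<open>u p is the solution for exponent p, x i p is the i-th concentration point.\<close>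
definition mu :: "(real \<Rightarrow> pt \<Rightarrow> real) \<Rightarrow> (nat \<Rightarrow> real \<Rightarrow> pt) \<Rightarrow> nat \<Rightarrow> real \<Rightarrow> real" where
  "mu u x i p = (p * \<bar>u p (x i p)\<bar> powr (p - 1)) powr (-1/2)"

definition Rdist :: "(nat \<Rightarrow> real \<Rightarrow> pt) \<Rightarrow> nat \<Rightarrow> real \<Rightarrow> pt \<Rightarrow> real" where
  "Rdist x k p y = Min ((\<lambda>i. dist y (x i p)) ` {1..k})"

definition resc :: "(real \<Rightarrow> pt \<Rightarrow> real) \<Rightarrow> (nat \<Rightarrow> real \<Rightarrow> pt) \<Rightarrow> nat \<Rightarrow> real \<Rightarrow> pt \<Rightarrow> real" where
  "resc u x i p y = p / u p (x i p) * (u p (x i p + mu u x i p *\<^sub>R y) - u p (x i p))"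

definition P1 :: "(nat \<Rightarrow> real) \<Rightarrow> (real \<Rightarrow> pt \<Rightarrow> real) \<Rightarrow> (nat \<Rightarrow> real \<Rightarrow> pt) \<Rightarrow> nat \<Rightarrow> bool" where
  "P1 ps u x k \<longleftrightarrow> (\<forall>i\<in>{1..k}. \<forall>j\<in>{1..k}. i \<noteq> j \<longrightarrow>
     filterlim (\<lambda>n. norm (x i (ps n) - x j (ps n)) / mu u x i (ps n)) at_top sequentially)"

definition P2 :: "pt set \<Rightarrow> (nat \<Rightarrow> real) \<Rightarrow> (real \<Rightarrow> pt \<Rightarrow> real) \<Rightarrow> (nat \<Rightarrow> real \<Rightarrow> pt) \<Rightarrow> nat \<Rightarrow> bool" where
  "P2 \<Omega> ps u x k \<longleftrightarrow> (\<forall>i\<in>{1..k}.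
     C1loc_conv (\<lambda>n. resc u x i (ps n))
                (\<lambda>n. {y. x i (ps n) + mu u x i (ps n) *\<^sub>R y \<in> \<Omega>}) U)"

definition P3 :: "pt set \<Rightarrow> (nat \<Rightarrow> real) \<Rightarrow> (real \<Rightarrow> pt \<Rightarrow> real) \<Rightarrow> (nat \<Rightarrow> real \<Rightarrow> pt) \<Rightarrow> nat \<Rightarrow> bool" where
  "P3 \<Omega> ps u x k \<longleftrightarrow> (\<exists>C>0. eventually (\<lambda>n. \<forall>y\<in>\<Omega>.
     ps n * (Rdist x k (ps n) y)\<^sup>2 * \<bar>u (ps n) y\<bar> powr (ps n - 1) \<le> C) sequentially)"

definition zfun :: "pt set \<Rightarrow> (real \<Rightarrow> pt \<Rightarrow> real) \<Rightarrow> (nat \<Rightarrow> real \<Rightarrow> pt) \<Rightarrow> nat \<Rightarrow> real \<Rightarrow> pt \<Rightarrow> real" where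
  "zfun \<Omega> u x i p y = p / u p (x i p) *
     (u p (x i p + mu u x i p *\<^sub>R y) * indicator (nodal_domain \<Omega> (u p) (x i p)) (x i p + mu u x i p *\<^sub>R y)
      - u p (x i p))"

definition zdom :: "pt set \<Rightarrow> (real \<Rightarrow> pt \<Rightarrow> real) \<Rightarrow> (nat \<Rightarrow> real \<Rightarrow> pt) \<Rightarrow> nat \<Rightarrow> real \<Rightarrow> pt set" where
  "zdom \<Omega> u x i p = {y. x i p + mu u x i p *\<^sub>R y \<in> nodal_domain \<Omega> (u p) (x i p)}"

end

theory Submission
  imports Defs
begin

text \<open>Since U is bounded
  below on every ball while the rescaled function equals -p at a zero of u, the C1_loc
  convergence of the rescalings to U forces u to be nonzero on balls of radius R mu around the
  concentration point, for every R and p large. Hence the distance to the nodal line is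
  eventually at least R mu, and these balls lie in the nodal domain, where the truncated
  rescaling z coincides with the untruncated one.\<close>

lemma differentiable_grad_transform_within_open:
  fixes f g :: "pt \<Rightarrow> real"
  assumes "f differentiable (at y)" "open T" "y \<in> T" "\<And>z. z \<in> T \<Longrightarrow> g z = f z"
  shows "g differentiable (at y)" and "grad g y = grad f y"
proof -
  have deriv: "(g has_derivative frechet_derivative f (at y)) (at y)"
    using has_derivative_transform_within_open[OF _ assms(2,3)] assms(1,4)
      frechet_derivative_works by metis
  then have "frechet_derivative g (at y) = frechet_derivative f (at y)"
    using frechet_derivative_at by metis
  with deriv show "g differentiable (at y)" and "grad g y = grad f y"
    by (auto simp: differentiable_def grad_def partial_def)
qed

lemma C1loc_conv_transform_eventually:
  assumes conv: "C1loc_conv f D g"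
    and eq: "\<And>R. eventually (\<lambda>n. ball 0 R \<subseteq> D' n \<and> (\<forall>y\<in>ball 0 R. f' n y = f n y)) sequentially"
  shows "C1loc_conv f' D' g"
  unfolding C1loc_conv_def
proof (intro allI impI)
  fix K :: "pt set" and e :: real
  assume K: "compact K" and e: "e > 0"
  obtain R where KR: "K \<subseteq> ball 0 R"
    using compact_imp_bounded[OF K] bounded_subset_ballD by blast
  show "eventually (\<lambda>n. K \<subseteq> D' n \<and> (\<forall>y\<in>K. f' n differentiable (at y) \<and>
      \<bar>f' n y - g y\<bar> < e \<and> norm (grad (f' n) y - grad g y) < e)) sequentially"
    using conv[unfolded C1loc_conv_def, rule_format, OF K e] eq[of R]
  proof eventually_elim
    case (elim n)
    have "f' n differentiable (at y) \<and> grad (f' n) y = grad (f n) y \<and> f' n y = f n y"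
      if "y \<in> K" for y
      using differentiable_grad_transform_within_open[of "f n" y "ball 0 R" "f' n"]
        elim that KR by auto
    with elim KR show ?case by auto
  qed
qed

lemma infdist_div_tendsto_at_top:
  fixes a :: "nat \<Rightarrow> 'a::real_normed_vector" and m :: "nat \<Rightarrow> real"
  assumes nonempty: "\<And>n. S n \<noteq> {}"
    and avoid: "\<And>R. eventually (\<lambda>n. m n > 0 \<and> (\<forall>y\<in>cball 0 R. a n + m n *\<^sub>R y \<notin> S n))
      sequentially"
  shows "filterlim (\<lambda>n. infdist (a n) (S n) / m n) at_top sequentially"
  unfolding filterlim_at_top
proof
  fix R :: real
  show "eventually (\<lambda>n. R \<le> infdist (a n) (S n) / m n) sequentially"
    using avoid[of R]
  proof eventually_elim
    case (elim n)
    have "R * m n \<le> dist (a n) z" if "z \<in> S n" for z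
    proof (rule ccontr)
      assume far: "\<not> R * m n \<le> dist (a n) z"
      define y where "y = (1 / m n) *\<^sub>R (z - a n)"
      have "norm y = dist (a n) z / m n"
        using elim by (simp add: y_def dist_norm norm_minus_commute)
      then have "y \<in> cball 0 R"
        using elim far by (simp add: pos_divide_le_eq)
      moreover have "a n + m n *\<^sub>R y = z"
        using elim by (simp add: y_def)
      ultimately show False
        using elim that by metis
    qed
    then have "R * m n \<le> infdist (a n) (S n)"
      unfolding infdist_notempty[OF nonempty] by (rule cINF_greatest[OF nonempty])
    with elim show ?case
      by (simp add: pos_le_divide_eq)
  qed
qed

lemma nodal_line_nonempty:
  assumes "connected \<Omega>" "continuous_on \<Omega> f" "sign_changing \<Omega> f"
  shows "nodal_line \<Omega> f \<noteq> {}"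
proof -
  obtain a b where "a \<in> \<Omega>" "f a > 0" "b \<in> \<Omega>" "f b < 0"
    using assms(3) unfolding sign_changing_def by blast
  moreover have "connected (f ` \<Omega>)"
    using assms(1,2) connected_continuous_image by blast
  ultimately have "0 \<in> f ` \<Omega>"
    unfolding connected_iff_interval by (metis image_eqI less_imp_le)
  then show ?thesis
    unfolding nodal_line_def by auto
qed

lemma lane_emden_solution_continuous_on:
  "lane_emden_solution \<Omega> p u \<Longrightarrow> continuous_on \<Omega> u"
  unfolding lane_emden_solution_def
  by (meson continuous_at_imp_continuous_on differentiable_imp_continuous_within)

lemma U_ge: "- (norm y)\<^sup>2 / 4 \<le> U y"
proof -
  define t where "t = (norm y)\<^sup>2 / 8"
  have t: "t \<ge> 0"
    by (simp add: t_def)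
  have "U y = - 2 * ln (1 + t)"
    using t by (simp add: U_def t_def ln_div ln_realpow)
  also have "\<dots> \<ge> - 2 * t"
    using ln_add_one_self_le_self[OF t] by simp
  finally show ?thesis
    by (simp add: t_def)
qed

lemma eventually_rescaled_ball_nonzero:
  assumes conv: "C1loc_conv (\<lambda>n. resc u x i (ps n))
      (\<lambda>n. {y. x i (ps n) + mu u x i (ps n) *\<^sub>R y \<in> \<Omega>}) U"
    and conc: "filterlim (\<lambda>n. ps n * \<bar>u (ps n) (x i (ps n))\<bar> powr (ps n - 1)) at_top sequentially"
    and ps_lim: "filterlim ps at_top sequentially"
  shows "eventually (\<lambda>n. mu u x i (ps n) > 0 \<and> (\<forall>y\<in>cball 0 R.
      x i (ps n) + mu u x i (ps n) *\<^sub>R y \<in> \<Omega> \<and>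
      u (ps n) (x i (ps n) + mu u x i (ps n) *\<^sub>R y) \<noteq> 0)) sequentially"
proof -
  have "eventually (\<lambda>n. cball 0 R \<subseteq> {y. x i (ps n) + mu u x i (ps n) *\<^sub>R y \<in> \<Omega>} \<and>
      (\<forall>y\<in>cball 0 R. \<bar>resc u x i (ps n) y - U y\<bar> < 1)) sequentially"
    using conv[unfolded C1loc_conv_def, rule_format, of "cball 0 R" 1]
    by (auto elim: eventually_mono)
  moreover have "eventually (\<lambda>n. 0 < ps n * \<bar>u (ps n) (x i (ps n))\<bar> powr (ps n - 1)) sequentially"
    using conc by (simp add: filterlim_at_top_dense)
  moreover have "eventually (\<lambda>n. R\<^sup>2 / 4 + 1 < ps n) sequentially"
    using ps_lim by (simp add: filterlim_at_top_dense)
  ultimately show ?thesis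
  proof eventually_elim
    case (elim n)
    have ua: "u (ps n) (x i (ps n)) \<noteq> 0"
      using elim(2) by auto
    have "u (ps n) (x i (ps n) + mu u x i (ps n) *\<^sub>R y) \<noteq> 0" if y: "y \<in> cball 0 R" for y
    proof
      assume "u (ps n) (x i (ps n) + mu u x i (ps n) *\<^sub>R y) = 0"
      then have "resc u x i (ps n) y = - ps n"
        using ua by (simp add: resc_def)
      moreover have "(norm y)\<^sup>2 \<le> R\<^sup>2"
        using y by (simp add: power_mono)
      ultimately show False
        using elim(1,3) y U_ge[of y] by force
    qed
    moreover have "ps n > 0"
      using elim(3) zero_le_power2[of R] by linarith
    then have "mu u x i (ps n) > 0"
      using ua by (simp add: mu_def)
    ultimately show ?case
      using elim(1) by auto
  qed
qed

lemma rescaled_ball_subset_nodal_domain: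
  assumes "0 \<le> R" "\<And>y. y \<in> cball 0 R \<Longrightarrow> a + m *\<^sub>R y \<in> \<Omega> \<and> f (a + m *\<^sub>R y) \<noteq> 0"
  shows "(\<lambda>y. a + m *\<^sub>R y) ` cball 0 R \<subseteq> nodal_domain \<Omega> f a"
  unfolding nodal_domain_def
proof (rule connected_component_maximal)
  show "a \<in> (\<lambda>y. a + m *\<^sub>R y) ` cball 0 R"
    using assms(1) by (auto intro!: image_eqI[of _ _ 0])
  show "connected ((\<lambda>y. a + m *\<^sub>R y) ` cball 0 R)"
    by (intro connected_continuous_image continuous_intros convex_connected convex_cball)
  show "(\<lambda>y. a + m *\<^sub>R y) ` cball 0 R \<subseteq> {y \<in> \<Omega>. f y \<noteq> 0}"
    using assms(2) by auto
qed

lemma zfun_eq_resc: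
  "x i p + mu u x i p *\<^sub>R y \<in> nodal_domain \<Omega> (u p) (x i p) \<Longrightarrow>
    zfun \<Omega> u x i p y = resc u x i p y"
  by (simp add: zfun_def resc_def)

lemma nodal_line_infdist_div_mu_tendsto:
  assumes conv: "C1loc_conv (\<lambda>n. resc u x i (ps n))
      (\<lambda>n. {y. x i (ps n) + mu u x i (ps n) *\<^sub>R y \<in> \<Omega>}) U"
    and conc: "filterlim (\<lambda>n. ps n * \<bar>u (ps n) (x i (ps n))\<bar> powr (ps n - 1)) at_top sequentially"
    and ps_lim: "filterlim ps at_top sequentially"
    and nonempty: "\<And>n. nodal_line \<Omega> (u (ps n)) \<noteq> {}"
  shows "filterlim (\<lambda>n. infdist (x i (ps n)) (nodal_line \<Omega> (u (ps n))) / mu u x i (ps n))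
      at_top sequentially"
  using nonempty
proof (rule infdist_div_tendsto_at_top)
  show "eventually (\<lambda>n. mu u x i (ps n) > 0 \<and> (\<forall>y\<in>cball 0 R.
      x i (ps n) + mu u x i (ps n) *\<^sub>R y \<notin> nodal_line \<Omega> (u (ps n)))) sequentially" for R
    using eventually_rescaled_ball_nonzero[OF conv conc ps_lim, of R]
    by eventually_elim (auto simp: nodal_line_def)
qed

lemma zfun_C1loc_conv:
  assumes conv: "C1loc_conv (\<lambda>n. resc u x i (ps n))
      (\<lambda>n. {y. x i (ps n) + mu u x i (ps n) *\<^sub>R y \<in> \<Omega>}) U"
    and conc: "filterlim (\<lambda>n. ps n * \<bar>u (ps n) (x i (ps n))\<bar> powr (ps n - 1)) at_top sequentially"
    and ps_lim: "filterlim ps at_top sequentially"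
  shows "C1loc_conv (\<lambda>n. zfun \<Omega> u x i (ps n)) (\<lambda>n. zdom \<Omega> u x i (ps n)) U"
  using conv
proof (rule C1loc_conv_transform_eventually)
  show "eventually (\<lambda>n. ball 0 R \<subseteq> zdom \<Omega> u x i (ps n) \<and>
      (\<forall>y\<in>ball 0 R. zfun \<Omega> u x i (ps n) y = resc u x i (ps n) y)) sequentially" for R
    using eventually_rescaled_ball_nonzero[OF conv conc ps_lim, of "max R 0"]
  proof eventually_elim
    case (elim n)
    have "(\<lambda>y. x i (ps n) + mu u x i (ps n) *\<^sub>R y) ` cball 0 (max R 0)
        \<subseteq> nodal_domain \<Omega> (u (ps n)) (x i (ps n))"
      by (rule rescaled_ball_subset_nodal_domain) (use elim in auto)
    then show ?case
      by (auto simp: zdom_def zfun_eq_resc image_subset_iff)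
  qed
qed

theorem corollary2p4:
  fixes \<Omega> :: "pt set" and u :: "real \<Rightarrow> pt \<Rightarrow> real" and \<beta> :: real
    and ps :: "nat \<Rightarrow> real" and k :: nat and x :: "nat \<Rightarrow> real \<Rightarrow> pt"
  assumes dom: "smooth_bounded_domain \<Omega>"
    and sol: "\<And>p. p > 1 \<Longrightarrow> lane_emden_solution \<Omega> p (u p) \<and> sign_changing \<Omega> (u p)"
    and energy: "((\<lambda>p. p * integral \<Omega> (\<lambda>y. (norm (grad (u p) y))\<^sup>2)) \<longlongrightarrow> \<beta>) at_top"
    and k: "k \<ge> 1"
    and ps_gt: "\<And>n. ps n > 1" and ps_lim: "filterlim ps at_top sequentially"
    and pts: "\<And>i p. i \<in> {1..k} \<Longrightarrow> p > 1 \<Longrightarrow> x i p \<in> \<Omega>"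
    and conc: "\<And>i. i \<in> {1..k} \<Longrightarrow>
        filterlim (\<lambda>n. ps n * \<bar>u (ps n) (x i (ps n))\<bar> powr (ps n - 1)) at_top sequentially"
    and p1: "P1 ps u x k" and p2: "P2 \<Omega> ps u x k" and p3: "P3 \<Omega> ps u x k"
    and maximal: "\<not> (\<exists>(y :: real \<Rightarrow> pt) (r :: nat \<Rightarrow> nat). strict_mono r \<and> (\<forall>p>1. y p \<in> \<Omega>) \<and>
        P1 (ps \<circ> r) u (x(Suc k := y)) (Suc k) \<and>
        P2 \<Omega> (ps \<circ> r) u (x(Suc k := y)) (Suc k) \<and>
        P3 \<Omega> (ps \<circ> r) u (x(Suc k := y)) (Suc k))"
  shows "\<forall>i\<in>{1..k}.
           filterlim (\<lambda>n. infdist (x i (ps n)) (nodal_line \<Omega> (u (ps n))) / mu u x i (ps n))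
             at_top sequentially
         \<and> C1loc_conv (\<lambda>n. zfun \<Omega> u x i (ps n)) (\<lambda>n. zdom \<Omega> u x i (ps n)) U"
proof (intro ballI conjI)
  fix i assume i: "i \<in> {1..k}"
  have conv: "C1loc_conv (\<lambda>n. resc u x i (ps n))
      (\<lambda>n. {y. x i (ps n) + mu u x i (ps n) *\<^sub>R y \<in> \<Omega>}) U"
    using p2 i unfolding P2_def by blast
  have "nodal_line \<Omega> (u (ps n)) \<noteq> {}" for n
    using nodal_line_nonempty dom sol[OF ps_gt] lane_emden_solution_continuous_on
    unfolding smooth_bounded_domain_def by metis
  then show "filterlim (\<lambda>n. infdist (x i (ps n)) (nodal_line \<Omega> (u (ps n))) / mu u x i (ps n))
      at_top sequentially"
    by (rule nodal_line_infdist_div_mu_tendsto[OF conv conc[OF i] ps_lim])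
  show "C1loc_conv (\<lambda>n. zfun \<Omega> u x i (ps n)) (\<lambda>n. zdom \<Omega> u x i (ps n)) U"
    by (rule zfun_C1loc_conv[OF conv conc[OF i] ps_lim])
qed

end
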